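(* For any connected graphs $G$ and $H$, $$G_{SR}\boxtimes H_{SR}\sqsubseteq (G\boxtimes H)_{SR}\sqsubseteq G_{SR}\oplus H_{SR}.$$
   Context: All graphs are simple; $d_G$ is the shortest-path distance. A vertex $u$ is maximally distant from $v$ in $G$ if for every neighbor $w$ of $u$, $d_G(v,w)\le d_G(u,v)$; $u,v$ are mutually maximally distant if each is maximally distant from the other. The strong resolving graph $G_{SR}$ of $G$ has vertex set $V(G)$, with $u,v$ adjacent iff $u$ and $v$ are mutually maximally distant in $G$. The strong product $G\boxtimes H$ has vertex set $V(G)\times V(H)$, with $(a,b)\sim(c,d)$ iff ($a=c$ and $bd\in E(H)$) or ($ac\in E(G)$ and $b=d$) or ($ac\in E(G)$ and $bd\in E(H)$). The Cartesian sum $G\oplus H$ has vertex set $V(G)\times V(H)$, with $(a,b)\sim(c,d)$ iff $ac\in E(G)$ or $bd\in E(H)$. For graphs $G'=(V',E')$ and $G=(V,E)$, $G'\sqsubseteq G$ means $V'\subseteq V$ and $E'\subseteq E$. *)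

theory Defs
  imports Main
begin

type_synonym 'a graph = "'a set \<times> ('a \<times> 'a) set"

definition simple_graph :: "'a graph \<Rightarrow> bool" where
  "simple_graph G \<longleftrightarrow> snd G \<subseteq> fst G \<times> fst G \<and> sym (snd G) \<and> irrefl (snd G)"

definition connected_graph :: "'a graph \<Rightarrow> bool" where
  "connected_graph G \<longleftrightarrow> fst G \<noteq> {} \<and> (\<forall>u\<in>fst G. \<forall>v\<in>fst G. (u, v) \<in> (snd G)\<^sup>*)"

definition gdist :: "'a graph \<Rightarrow> 'a \<Rightarrow> 'a \<Rightarrow> nat" where
  "gdist G u v = (LEAST n. (u, v) \<in> (snd G) ^^ n)"

definition max_distant :: "'a graph \<Rightarrow> 'a \<Rightarrow> 'a \<Rightarrow> bool" where
  "max_distant G u v \<longleftrightarrow> (\<forall>w. (u, w) \<in> snd G \<longrightarrow> gdist G v w \<le> gdist G u v)"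

definition mutually_max_distant :: "'a graph \<Rightarrow> 'a \<Rightarrow> 'a \<Rightarrow> bool" where
  "mutually_max_distant G u v \<longleftrightarrow> max_distant G u v \<and> max_distant G v u"

definition strong_resolving_graph :: "'a graph \<Rightarrow> 'a graph" where
  "strong_resolving_graph G =
     (fst G, {(u, v). u \<in> fst G \<and> v \<in> fst G \<and> u \<noteq> v \<and> mutually_max_distant G u v})"

definition strong_product :: "'a graph \<Rightarrow> 'b graph \<Rightarrow> ('a \<times> 'b) graph" where
  "strong_product G H =
     (fst G \<times> fst H,
      {((a, b), (c, d)). (a, b) \<in> fst G \<times> fst H \<and> (c, d) \<in> fst G \<times> fst H \<and>
         ((a = c \<and> (b, d) \<in> snd H) \<or> ((a, c) \<in> snd G \<and> b = d) \<or>
          ((a, c) \<in> snd G \<and> (b, d) \<in> snd H))})"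

definition cartesian_sum :: "'a graph \<Rightarrow> 'b graph \<Rightarrow> ('a \<times> 'b) graph" where
  "cartesian_sum G H =
     (fst G \<times> fst H,
      {((a, b), (c, d)). (a, b) \<in> fst G \<times> fst H \<and> (c, d) \<in> fst G \<times> fst H \<and>
         ((a, c) \<in> snd G \<or> (b, d) \<in> snd H)})"

definition subgraph :: "'a graph \<Rightarrow> 'a graph \<Rightarrow> bool" where
  "subgraph G' G \<longleftrightarrow> fst G' \<subseteq> fst G \<and> snd G' \<subseteq> snd G"

end

theory Submission
  imports Defs
begin

text \<open>Call a walk lazy if it may also stay put at a vertex. Then \<open>d(u, v) \<le> n\<close> iff there is
  a lazy walk of length \<open>n\<close> from \<open>u\<close> to \<open>v\<close>, and lazy walks in \<open>G \<boxtimes> H\<close> are exactly pairs of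
  lazy walks of equal length in \<open>G\<close> and \<open>H\<close>; hence the distance in \<open>G \<boxtimes> H\<close> is the maximum
  of the coordinate distances. A neighbour of \<open>(a, b)\<close> moves each coordinate by at most one
  step, so if each coordinate pair is equal or mutually maximally distant the maximum cannot
  grow, which gives the first inclusion. Conversely, if \<open>(a, b)\<close> and \<open>(c, d)\<close> are mutually
  maximally distant and, say, \<open>d(b, d) \<le> d(a, c)\<close>, moving only the first coordinate along
  edges of \<open>G\<close> shows that \<open>a\<close> and \<open>c\<close> are mutually maximally distant in \<open>G\<close>.\<close>

lemma relpow_sym:
  assumes "sym R" and "(a, b) \<in> R ^^ n"
  shows "(b, a) \<in> R ^^ n"
  using assms(2)
proof (induction n arbitrary: b)
  case 0
  then show ?case by simp
next
  case (Suc n)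
  then obtain y where "(a, y) \<in> R ^^ n" "(y, b) \<in> R"
    by (auto elim: relpow_Suc_E)
  with Suc.IH assms(1) have "(b, y) \<in> R" "(y, a) \<in> R ^^ n"
    by (auto dest: symD)
  then show ?case by (rule relpow_Suc_I2)
qed

lemma relpow_mono: "(R :: ('a \<times> 'a) set) \<subseteq> S \<Longrightarrow> R ^^ n \<subseteq> S ^^ n"
  by (induction n) (simp_all add: relcomp_mono relpow.simps)

lemma gdist_le: "(a, c) \<in> snd G ^^ k \<Longrightarrow> gdist G a c \<le> k"
  unfolding gdist_def by (rule Least_le)

lemma relpow_gdist: "(a, c) \<in> snd G ^^ k \<Longrightarrow> (a, c) \<in> snd G ^^ gdist G a c"
  unfolding gdist_def by (rule LeastI)

lemma gdist_self [simp]: "gdist G a a = 0"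
  using gdist_le[where a = a and c = a and G = G and k = 0] by simp

lemma gdist_le_1: "(a, c) \<in> snd G \<Longrightarrow> gdist G a c \<le> 1"
  by (rule gdist_le) simp

lemma gdist_sym: "sym (snd G) \<Longrightarrow> gdist G a c = gdist G c a"
  unfolding gdist_def using relpow_sym by metis

lemma gdist_eq_0_iff: "(a, c) \<in> (snd G)\<^sup>* \<Longrightarrow> gdist G a c = 0 \<longleftrightarrow> a = c"
  using relpow_gdist rtrancl_imp_relpow by fastforce

definition reflexive_adjacency :: "'a graph \<Rightarrow> ('a \<times> 'a) set" where
  "reflexive_adjacency G = snd G \<union> Id_on (fst G)"

lemma relpow_reflexive_adjacency_imp_relpow_le:
  "(a, c) \<in> reflexive_adjacency G ^^ n \<Longrightarrow> \<exists>k\<le>n. (a, c) \<in> snd G ^^ k"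
proof (induction n arbitrary: c)
  case 0
  then show ?case by auto
next
  case (Suc n)
  then obtain y where y: "(a, y) \<in> reflexive_adjacency G ^^ n" "(y, c) \<in> reflexive_adjacency G"
    by (auto elim: relpow_Suc_E)
  from Suc.IH[OF y(1)] obtain k where "k \<le> n" "(a, y) \<in> snd G ^^ k" by blast
  with y(2) show ?case
    unfolding reflexive_adjacency_def by (auto intro: relpow_Suc_I le_SucI)
qed

lemma relpow_reflexive_adjacency_refl:
  "c \<in> fst G \<Longrightarrow> (c, c) \<in> reflexive_adjacency G ^^ m"
  by (induction m) (auto simp: reflexive_adjacency_def intro: relpow_Suc_I)

lemma relpow_reflexive_adjacency_iff:
  assumes "snd G \<subseteq> fst G \<times> fst G" and "a \<in> fst G"
  shows "(a, c) \<in> reflexive_adjacency G ^^ n \<longleftrightarrow> (\<exists>k\<le>n. (a, c) \<in> snd G ^^ k)"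
proof
  assume "\<exists>k\<le>n. (a, c) \<in> snd G ^^ k"
  then obtain k where k: "k \<le> n" "(a, c) \<in> snd G ^^ k" by blast
  have "snd G \<subseteq> reflexive_adjacency G"
    by (simp add: reflexive_adjacency_def)
  with k(2) have "(a, c) \<in> reflexive_adjacency G ^^ k"
    using relpow_mono by blast
  moreover have "c \<in> fst G"
    using k(2) assms by (cases k) (auto elim: relpow_Suc_E)
  then have "(c, c) \<in> reflexive_adjacency G ^^ (n - k)"
    by (rule relpow_reflexive_adjacency_refl)
  ultimately have "(a, c) \<in> reflexive_adjacency G ^^ (k + (n - k))"
    by (rule relpow_trans)
  with k(1) show "(a, c) \<in> reflexive_adjacency G ^^ n" by simp
qed (rule relpow_reflexive_adjacency_imp_relpow_le)

lemma gdist_le_iff_relpow_reflexive_adjacency: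
  assumes "snd G \<subseteq> fst G \<times> fst G" and "a \<in> fst G" and "(a, c) \<in> (snd G)\<^sup>*"
  shows "gdist G a c \<le> n \<longleftrightarrow> (a, c) \<in> reflexive_adjacency G ^^ n"
proof -
  obtain k where "(a, c) \<in> snd G ^^ k"
    using rtrancl_imp_relpow[OF assms(3)] by (elim exE)
  then have walk: "(a, c) \<in> snd G ^^ gdist G a c"
    by (rule relpow_gdist)
  show ?thesis
  proof
    assume "gdist G a c \<le> n"
    with walk show "(a, c) \<in> reflexive_adjacency G ^^ n"
      unfolding relpow_reflexive_adjacency_iff[OF assms(1,2)] by blast
  next
    assume "(a, c) \<in> reflexive_adjacency G ^^ n"
    then have "\<exists>j\<le>n. (a, c) \<in> snd G ^^ j"
      by (rule relpow_reflexive_adjacency_imp_relpow_le)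
    then obtain j where "j \<le> n" "(a, c) \<in> snd G ^^ j"
      by blast
    then show "gdist G a c \<le> n"
      using gdist_le le_trans by meson
  qed
qed

definition rel_pair :: "('a \<times> 'a) set \<Rightarrow> ('b \<times> 'b) set \<Rightarrow> (('a \<times> 'b) \<times> ('a \<times> 'b)) set" where
  "rel_pair R S = {((a, b), (c, d)). (a, c) \<in> R \<and> (b, d) \<in> S}"

lemma relpow_rel_pair_iff:
  "((a, b), (c, d)) \<in> rel_pair R S ^^ n \<longleftrightarrow> (a, c) \<in> R ^^ n \<and> (b, d) \<in> S ^^ n"
proof (induction n arbitrary: c d)
  case 0
  then show ?case by auto
next
  case (Suc n)
  show ?case
  proof
    assume "((a, b), (c, d)) \<in> rel_pair R S ^^ Suc n"
    then obtain x y where "((a, b), (x, y)) \<in> rel_pair R S ^^ n" "((x, y), (c, d)) \<in> rel_pair R S"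
      by (auto elim: relpow_Suc_E)
    with Suc.IH show "(a, c) \<in> R ^^ Suc n \<and> (b, d) \<in> S ^^ Suc n"
      by (auto simp: rel_pair_def intro: relpow_Suc_I)
  next
    assume "(a, c) \<in> R ^^ Suc n \<and> (b, d) \<in> S ^^ Suc n"
    then obtain x y where "(a, x) \<in> R ^^ n" "(x, c) \<in> R" "(b, y) \<in> S ^^ n" "(y, d) \<in> S"
      by (auto elim!: relpow_Suc_E)
    with Suc.IH[of x y] show "((a, b), (c, d)) \<in> rel_pair R S ^^ Suc n"
      by (auto simp: rel_pair_def intro: relpow_Suc_I)
  qed
qed

lemma reflexive_adjacency_strong_product:
  assumes "snd G \<subseteq> fst G \<times> fst G" and "snd H \<subseteq> fst H \<times> fst H"
  shows "reflexive_adjacency (strong_product G H) =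
    rel_pair (reflexive_adjacency G) (reflexive_adjacency H)"
  using assms by (auto simp: reflexive_adjacency_def rel_pair_def strong_product_def)

lemma gdist_strong_product:
  assumes G: "snd G \<subseteq> fst G \<times> fst G" "a \<in> fst G" "(a, c) \<in> (snd G)\<^sup>*"
    and H: "snd H \<subseteq> fst H \<times> fst H" "b \<in> fst H" "(b, d) \<in> (snd H)\<^sup>*"
  shows "gdist (strong_product G H) (a, b) (c, d) = max (gdist G a c) (gdist H b d)"
proof -
  let ?P = "strong_product G H"
  have P: "snd ?P \<subseteq> fst ?P \<times> fst ?P" "(a, b) \<in> fst ?P"
    using G(2) H(2) by (auto simp: strong_product_def)
  have reflexive_walk_iff:
    "((a, b), (c, d)) \<in> reflexive_adjacency ?P ^^ n \<longleftrightarrow> max (gdist G a c) (gdist H b d) \<le> n" for n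
    by (simp add: reflexive_adjacency_strong_product G(1) H(1) relpow_rel_pair_iff
        gdist_le_iff_relpow_reflexive_adjacency[OF G] gdist_le_iff_relpow_reflexive_adjacency[OF H])
  then have "((a, b), (c, d)) \<in> reflexive_adjacency ?P ^^ max (gdist G a c) (gdist H b d)"
    by simp
  from relpow_reflexive_adjacency_imp_relpow_le[OF this]
  obtain k where "((a, b), (c, d)) \<in> snd ?P ^^ k"
    by blast
  then have "((a, b), (c, d)) \<in> (snd ?P)\<^sup>*"
    by (rule relpow_imp_rtrancl)
  from gdist_le_iff_relpow_reflexive_adjacency[OF P this] reflexive_walk_iff
  have "gdist ?P (a, b) (c, d) \<le> n \<longleftrightarrow> max (gdist G a c) (gdist H b d) \<le> n" for n
    by simp
  then show ?thesis
    by (metis le_antisym order_refl)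
qed

lemma gdist_le_max_if_max_distant:
  assumes "sym (snd G)" and "a = c \<or> max_distant G a c" and "x = a \<or> (a, x) \<in> snd G"
  shows "gdist G c x \<le> max (gdist G a c) 1"
proof (cases "x = a")
  case True
  then show ?thesis using gdist_sym[OF assms(1)] by simp
next
  case False
  with assms(3) have edge: "(a, x) \<in> snd G" by simp
  show ?thesis
  proof (cases "a = c")
    case True
    then show ?thesis using gdist_le_1[OF edge] by simp
  next
    case False
    with assms(2) edge have "gdist G c x \<le> gdist G a c"
      unfolding max_distant_def by blast
    then show ?thesis by simp
  qed
qed

lemma connected_graph_rtrancl:
  "connected_graph G \<Longrightarrow> a \<in> fst G \<Longrightarrow> c \<in> fst G \<Longrightarrow> (a, c) \<in> (snd G)\<^sup>*"
  unfolding connected_graph_def by blast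

locale connected_simple_graphs =
  fixes G :: "'a graph" and H :: "'b graph"
  assumes simple_G: "simple_graph G" and connected_G: "connected_graph G"
    and simple_H: "simple_graph H" and connected_H: "connected_graph H"
begin

lemma edges_G: "snd G \<subseteq> fst G \<times> fst G" and sym_G: "sym (snd G)"
  and edges_H: "snd H \<subseteq> fst H \<times> fst H" and sym_H: "sym (snd H)"
  using simple_G simple_H by (simp_all add: simple_graph_def)

lemma gdist_strong_product_eq_max:
  assumes "a \<in> fst G" "c \<in> fst G" "b \<in> fst H" "d \<in> fst H"
  shows "gdist (strong_product G H) (a, b) (c, d) = max (gdist G a c) (gdist H b d)"
  using assms by (intro gdist_strong_product edges_G edges_H connected_graph_rtrancl connected_G connected_H)

lemma gdist_strong_product_pos:
  assumes "a \<in> fst G" "c \<in> fst G" "b \<in> fst H" "d \<in> fst H" and "(a, b) \<noteq> (c, d)"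
  shows "0 < max (gdist G a c) (gdist H b d)"
proof (rule ccontr)
  assume "\<not> ?thesis"
  then have "gdist G a c = 0" "gdist H b d = 0" by simp_all
  moreover have "(a, c) \<in> (snd G)\<^sup>*" "(b, d) \<in> (snd H)\<^sup>*"
    using connected_graph_rtrancl[OF connected_G] connected_graph_rtrancl[OF connected_H] assms(1-4)
    by simp_all
  ultimately have "a = c" "b = d" by (simp_all add: gdist_eq_0_iff)
  with assms(5) show False by simp
qed

lemma max_distant_strong_productI:
  assumes v: "a \<in> fst G" "c \<in> fst G" "b \<in> fst H" "d \<in> fst H"
    and "(a, b) \<noteq> (c, d)"
    and "a = c \<or> max_distant G a c" and "b = d \<or> max_distant H b d"
  shows "max_distant (strong_product G H) (a, b) (c, d)"
  unfolding max_distant_def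
proof (intro allI impI)
  fix w
  assume "((a, b), w) \<in> snd (strong_product G H)"
  then obtain x y where w: "w = (x, y)" "x \<in> fst G" "y \<in> fst H"
    and xy: "x = a \<or> (a, x) \<in> snd G" "y = b \<or> (b, y) \<in> snd H"
    by (auto simp: strong_product_def)
  have "gdist G c x \<le> max (gdist G a c) 1"
    using sym_G assms(6) xy(1) by (rule gdist_le_max_if_max_distant)
  moreover have "gdist H d y \<le> max (gdist H b d) 1"
    using sym_H assms(7) xy(2) by (rule gdist_le_max_if_max_distant)
  moreover have "0 < max (gdist G a c) (gdist H b d)"
    using v assms(5) by (rule gdist_strong_product_pos)
  ultimately show "gdist (strong_product G H) (c, d) w \<le> gdist (strong_product G H) (a, b) (c, d)"
    using gdist_strong_product_eq_max[OF v] gdist_strong_product_eq_max[OF v(2) w(2) v(4) w(3)] w(1)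
    by (simp add: max_def split: if_splits)
qed

lemma max_distant_fst_if_max_distant_strong_product:
  assumes v: "a \<in> fst G" "c \<in> fst G" "b \<in> fst H" "d \<in> fst H"
    and le: "gdist H b d \<le> gdist G a c"
    and "max_distant (strong_product G H) (a, b) (c, d)"
  shows "max_distant G a c"
  unfolding max_distant_def
proof (intro allI impI)
  fix x
  assume edge: "(a, x) \<in> snd G"
  with edges_G have x: "x \<in> fst G" by blast
  with edge v have "((a, b), (x, b)) \<in> snd (strong_product G H)"
    by (simp add: strong_product_def)
  with assms(6) have "gdist (strong_product G H) (c, d) (x, b) \<le> gdist (strong_product G H) (a, b) (c, d)"
    unfolding max_distant_def by blast
  then show "gdist G c x \<le> gdist G a c"
    using le gdist_strong_product_eq_max[OF v] gdist_strong_product_eq_max[OF v(2) x v(4,3)]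
    by simp
qed

lemma max_distant_snd_if_max_distant_strong_product:
  assumes v: "a \<in> fst G" "c \<in> fst G" "b \<in> fst H" "d \<in> fst H"
    and le: "gdist G a c \<le> gdist H b d"
    and "max_distant (strong_product G H) (a, b) (c, d)"
  shows "max_distant H b d"
  unfolding max_distant_def
proof (intro allI impI)
  fix y
  assume edge: "(b, y) \<in> snd H"
  with edges_H have y: "y \<in> fst H" by blast
  with edge v have "((a, b), (a, y)) \<in> snd (strong_product G H)"
    by (simp add: strong_product_def)
  with assms(6) have "gdist (strong_product G H) (c, d) (a, y) \<le> gdist (strong_product G H) (a, b) (c, d)"
    unfolding max_distant_def by blast
  then show "gdist H d y \<le> gdist H b d"
    using le gdist_strong_product_eq_max[OF v] gdist_strong_product_eq_max[OF v(2,1) v(4) y]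
    by simp
qed

lemma mutually_max_distant_strong_productI:
  assumes v: "a \<in> fst G" "c \<in> fst G" "b \<in> fst H" "d \<in> fst H"
    and "(a, b) \<noteq> (c, d)"
    and "a = c \<or> mutually_max_distant G a c" and "b = d \<or> mutually_max_distant H b d"
  shows "mutually_max_distant (strong_product G H) (a, b) (c, d)"
  using assms
  by (auto simp: mutually_max_distant_def intro!: max_distant_strong_productI)

lemma mutually_max_distant_strong_productD:
  assumes v: "a \<in> fst G" "c \<in> fst G" "b \<in> fst H" "d \<in> fst H"
    and "(a, b) \<noteq> (c, d)"
    and "mutually_max_distant (strong_product G H) (a, b) (c, d)"
  shows "a \<noteq> c \<and> mutually_max_distant G a c \<or> b \<noteq> d \<and> mutually_max_distant H b d"
proof -
  have max_distant: "max_distant (strong_product G H) (a, b) (c, d)"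
      "max_distant (strong_product G H) (c, d) (a, b)"
    using assms(6) by (simp_all add: mutually_max_distant_def)
  have pos: "0 < max (gdist G a c) (gdist H b d)"
    using v assms(5) by (rule gdist_strong_product_pos)
  have sym_dist: "gdist G c a = gdist G a c" "gdist H d b = gdist H b d"
    using gdist_sym sym_G sym_H by metis+
  consider "gdist H b d \<le> gdist G a c" | "gdist G a c \<le> gdist H b d"
    by linarith
  then show ?thesis
  proof cases
    case 1
    with pos have "a \<noteq> c" by auto
    moreover have "max_distant G a c" "max_distant G c a"
      using max_distant_fst_if_max_distant_strong_product[OF v 1 max_distant(1)]
        max_distant_fst_if_max_distant_strong_product[OF v(2,1,4,3) _ max_distant(2)] 1 sym_dist
      by simp_all
    ultimately show ?thesis by (simp add: mutually_max_distant_def)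
  next
    case 2
    with pos have "b \<noteq> d" by auto
    moreover have "max_distant H b d" "max_distant H d b"
      using max_distant_snd_if_max_distant_strong_product[OF v 2 max_distant(1)]
        max_distant_snd_if_max_distant_strong_product[OF v(2,1,4,3) _ max_distant(2)] 2 sym_dist
      by simp_all
    ultimately show ?thesis by (simp add: mutually_max_distant_def)
  qed
qed

lemma strong_product_subgraph_strong_resolving_graph:
  "subgraph (strong_product (strong_resolving_graph G) (strong_resolving_graph H))
            (strong_resolving_graph (strong_product G H))"
  unfolding subgraph_def
proof (intro conjI subsetI)
  fix e
  assume "e \<in> snd (strong_product (strong_resolving_graph G) (strong_resolving_graph H))"
  then obtain a b c d where e: "e = ((a, b), (c, d))"
    and v: "a \<in> fst G" "c \<in> fst G" "b \<in> fst H" "d \<in> fst H"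
    and "(a, b) \<noteq> (c, d)"
    and "a = c \<or> mutually_max_distant G a c" "b = d \<or> mutually_max_distant H b d"
    by (auto simp: strong_product_def strong_resolving_graph_def)
  then show "e \<in> snd (strong_resolving_graph (strong_product G H))"
    using mutually_max_distant_strong_productI
    by (simp add: strong_resolving_graph_def strong_product_def)
qed (simp add: strong_product_def strong_resolving_graph_def)

lemma strong_resolving_graph_subgraph_cartesian_sum:
  "subgraph (strong_resolving_graph (strong_product G H))
            (cartesian_sum (strong_resolving_graph G) (strong_resolving_graph H))"
  unfolding subgraph_def
proof (intro conjI subsetI)
  fix e
  assume "e \<in> snd (strong_resolving_graph (strong_product G H))"
  then obtain a b c d where e: "e = ((a, b), (c, d))"
    and v: "a \<in> fst G" "c \<in> fst G" "b \<in> fst H" "d \<in> fst H"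
    and "(a, b) \<noteq> (c, d)" "mutually_max_distant (strong_product G H) (a, b) (c, d)"
    by (auto simp: strong_product_def strong_resolving_graph_def)
  then show "e \<in> snd (cartesian_sum (strong_resolving_graph G) (strong_resolving_graph H))"
    using mutually_max_distant_strong_productD
    by (auto simp: cartesian_sum_def strong_resolving_graph_def)
qed (simp add: cartesian_sum_def strong_product_def strong_resolving_graph_def)

end

theorem theorem7:
  fixes G :: "'a graph" and H :: "'b graph"
  assumes "simple_graph G" "finite (fst G)" "connected_graph G"
      and "simple_graph H" "finite (fst H)" "connected_graph H"
  shows "subgraph (strong_product (strong_resolving_graph G) (strong_resolving_graph H))
                  (strong_resolving_graph (strong_product G H))
       \<and> subgraph (strong_resolving_graph (strong_product G H))
                  (cartesian_sum (strong_resolving_graph G) (strong_resolving_graph H))"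
proof -
  interpret connected_simple_graphs G H
    using assms(1,3,4,6) by unfold_locales
  show ?thesis
    using strong_product_subgraph_strong_resolving_graph
      strong_resolving_graph_subgraph_cartesian_sum
    by blast
qed

end
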